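(* For integers $m,n\ge0$ let $p_m(t,n)=D_m(C(t);n)\in\mathbb Z[t]$. Then every $p_m(t,n)$ is a nonzero polynomial, $p_m(t,0)=1$, $p_m(t,1)=C_m(t)$, and for all $m\ge0$, $n\ge2$, $$p_m(t,n-1)p_{m+2}(t,n-1)-p_{m+1}(t,n-1)^2=p_m(t,n)\,p_{m+2}(t,n-2).$$ Consequently, if $(q_m(n))_{m,n\ge0}$ is any family of elements of the field $\mathbb Q(t)$ with $q_m(0)=1$, $q_m(1)=C_m(t)$ for all $m\ge0$ and $q_m(n-1)q_{m+2}(n-1)-q_{m+1}(n-1)^2=q_m(n)q_{m+2}(n-2)$ for all $m\ge0,n\ge2$, then $q_m(n)=p_m(t,n)$ for all $m,n\ge0$.
   Context: The Narayana polynomials are $C_0(t)=1$ and $C_n(t)=\sum_{k=0}^{n-1}\binom{n-1}{k}\binom{n}{k}\frac{1}{k+1}t^k$ for $n\ge1$ (so $C_n(1)$ is the Catalan number $C_n$); they are extended by $C_n(t)=0$ for $n<0$. For $m\in\mathbb Z$ and $n\ge0$, $D_m(C(t);n)=\det(C_{i+j+m}(t))_{i,j=0}^{n-1}$, the $0\times0$ determinant being $1$. *)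

theory Defs
  imports "Jordan_Normal_Form.Determinant"
    "HOL-Computational_Algebra.Polynomial_Factorial"
begin

definition narayana :: "nat \<Rightarrow> rat poly" where
  "narayana n = (if n = 0 then 1 else
     (\<Sum>k<n. monom (of_nat ((n - 1) choose k) * of_nat (n choose k) / of_nat (k + 1)) k))"

definition hankel_narayana :: "nat \<Rightarrow> nat \<Rightarrow> rat poly" where
  "hankel_narayana m n = det (mat n n (\<lambda>(i, j). narayana (i + j + m)))"

end

theory Submission
  imports Defs
begin

text \<open>The condensation identity is the Desnanot--Jacobi identity for the Hankel matrix of
  order \<open>n\<close> with entries \<open>C\<^bsub>i+j+m\<^esub>(t)\<close>: its corner minors of order \<open>n - 1\<close> and its central
  minor of order \<open>n - 2\<close> are Hankel determinants of the same kind, with \<open>m\<close> shifted by 0, 1 or 2.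
  The Hankel determinants are nonzero because at \<open>t = 1\<close> the Narayana polynomials become the
  Catalan numbers \<open>C\<^bsub>k\<^esub> = ballot (2k) 0\<close>, and splitting lattice paths shows that the evaluated
  Hankel matrix is the Gram matrix \<open>B B\<^sup>T\<close> of the ballot numbers \<open>B\<^bsub>ih\<^esub> = ballot (2i + m) h\<close>;
  \<open>B\<close> is in echelon form with unit pivots, so the Gram determinant is positive. Nonvanishing also
  lets the recurrence determine \<open>q\<^bsub>m\<^esub>(n)\<close> from smaller \<open>n\<close>, which gives uniqueness. Integrality
  reduces to that of the Narayana numbers \<open>binom k i * binom (k + 1) i / (i + 1)\<close>.\<close>

lemma mat_delete_nth [simp]:
  "i' < dim_row A - 1 \<Longrightarrow> j' < dim_col A - 1 \<Longrightarrow>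
   mat_delete A i j $$ (i', j') = A $$ (if i' < i then i' else Suc i', if j' < j then j' else Suc j')"
  unfolding mat_delete_def by simp

lemma sum_eq_single:
  assumes "finite S" "j \<in> S" "\<And>l. l \<in> S \<Longrightarrow> l \<noteq> j \<Longrightarrow> f l = 0"
  shows "sum f S = f j"
  using assms by (subst sum.remove[of S j]) (auto intro: sum.neutral)

lemma det_eq_single_entry_row:
  assumes A: "A \<in> carrier_mat n n" and i: "i < n" and j: "j < n"
    and zero: "\<And>j'. j' < n \<Longrightarrow> j' \<noteq> j \<Longrightarrow> A $$ (i, j') = 0"
  shows "det A = A $$ (i, j) * cofactor A i j"
  unfolding laplace_expansion_row[OF A i] by (rule sum_eq_single) (use j zero in auto)

lemma det_eq_single_entry_col:
  assumes A: "A \<in> carrier_mat n n" and i: "i < n" and j: "j < n"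
    and zero: "\<And>i'. i' < n \<Longrightarrow> i' \<noteq> i \<Longrightarrow> A $$ (i', j) = 0"
  shows "det A = A $$ (i, j) * cofactor A i j"
  unfolding laplace_expansion_column[OF A j] by (rule sum_eq_single) (use i zero in auto)

lemma det_identity_but_first_last_columns:
  fixes x y :: "nat \<Rightarrow> 'a :: comm_ring_1" and k :: nat
  defines "M \<equiv> mat (Suc (Suc k)) (Suc (Suc k))
    (\<lambda>(i, j). if j = 0 then x i else if j = Suc k then y i else of_bool (i = j))"
  shows "det M = x 0 * y (Suc k) - y 0 * x (Suc k)"
proof -
  define P where "P = mat_delete M 0 0"
  define Q where "Q = mat_delete M 0 (Suc k)"
  have M: "M \<in> carrier_mat (Suc (Suc k)) (Suc (Suc k))" by (simp add: M_def)
  have P: "P \<in> carrier_mat (Suc k) (Suc k)" and Q: "Q \<in> carrier_mat (Suc k) (Suc k)"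
    by (simp_all add: P_def Q_def M_def mat_delete_def)
  have "det M = (\<Sum>j \<in> {0, Suc k}. M $$ (0, j) * cofactor M 0 j)"
    unfolding laplace_expansion_row[OF M zero_less_Suc]
    by (rule sum.mono_neutral_right) (auto simp: M_def)
  also have "\<dots> = x 0 * det P - y 0 * (-1) ^ k * det Q"
    by (simp add: M_def cofactor_def P_def Q_def)
  also have "det P = y (Suc k)"
  proof -
    have "det P = P $$ (k, k) * cofactor P k k"
      by (rule det_eq_single_entry_row[OF P]) (auto simp: P_def M_def)
    moreover have "mat_delete P k k = 1\<^sub>m k" by (rule eq_matI) (auto simp: P_def M_def)
    ultimately show ?thesis by (simp add: cofactor_def P_def M_def)
  qed
  also have "det Q = (-1) ^ k * x (Suc k)"
  proof -
    have "det Q = Q $$ (k, 0) * cofactor Q k 0"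
      by (rule det_eq_single_entry_row[OF Q]) (auto simp: Q_def M_def)
    moreover have "mat_delete Q k 0 = 1\<^sub>m k" by (rule eq_matI) (auto simp: Q_def M_def)
    ultimately show ?thesis by (simp add: cofactor_def Q_def M_def)
  qed
  finally show ?thesis by (simp add: mult_ac flip: power_add)
qed

lemma det_scaled_unit_first_last_columns:
  fixes A :: "'a :: comm_ring_1 mat" and d :: 'a and k :: nat
  assumes A: "A \<in> carrier_mat (Suc (Suc k)) (Suc (Suc k))"
  defines "B \<equiv> mat (Suc (Suc k)) (Suc (Suc k)) (\<lambda>(i, j).
    if j = 0 then of_bool (i = 0) * d else if j = Suc k then of_bool (i = Suc k) * d else A $$ (i, j))"
  shows "det B = d * d * det (mat_delete (mat_delete A 0 0) k k)"
proof -
  define B' where "B' = mat_delete B 0 0"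
  have B: "B \<in> carrier_mat (Suc (Suc k)) (Suc (Suc k))" by (simp add: B_def)
  have B': "B' \<in> carrier_mat (Suc k) (Suc k)" by (simp add: B'_def B_def mat_delete_def)
  have "det B = d * det B'"
    using det_eq_single_entry_col[OF B, of 0 0] by (auto simp: B_def B'_def cofactor_def)
  also have "det B' = d * det (mat_delete B' k k)"
    using det_eq_single_entry_col[OF B', of k k] by (auto simp: B_def B'_def cofactor_def)
  also have "mat_delete B' k k = mat_delete (mat_delete A 0 0) k k"
    by (rule eq_matI) (use A in \<open>auto simp: B'_def B_def\<close>)
  finally show ?thesis by simp
qed

theorem desnanot_jacobi:
  fixes A :: "'a :: idom mat"
  assumes A: "A \<in> carrier_mat (Suc (Suc k)) (Suc (Suc k))" and det_A: "det A \<noteq> 0"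
  shows "det (mat_delete A 0 0) * det (mat_delete A (Suc k) (Suc k))
       - det (mat_delete A 0 (Suc k)) * det (mat_delete A (Suc k) 0)
       = det A * det (mat_delete (mat_delete A 0 0) k k)"
proof -
  let ?n = "Suc (Suc k)" and ?L = "Suc k"
  define M where "M = mat ?n ?n (\<lambda>(i, j).
    if j = 0 then cofactor A 0 i else if j = ?L then cofactor A ?L i else of_bool (i = j))"
  define B where "B = mat ?n ?n (\<lambda>(i, j).
    if j = 0 then of_bool (i = 0) * det A else if j = ?L then of_bool (i = ?L) * det A else A $$ (i, j))"
  have M: "M \<in> carrier_mat ?n ?n" by (simp add: M_def)
  have col_M: "col M j = (if j = 0 \<or> j = ?L then col (adj_mat A) j else col (1\<^sub>m ?n) j)"
    if "j < ?n" for j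
    using A that by (intro eq_vecI) (auto simp: M_def adj_mat_def)
  have "A * M = B"
  proof (rule eq_matI)
    fix i j assume "i < dim_row B" "j < dim_col B"
    then have ij: "i < ?n" "j < ?n" by (auto simp: B_def)
    have "(A * M) $$ (i, j) = row A i \<bullet> col M j" using A M ij by simp
    also have "\<dots> = (if j = 0 \<or> j = ?L then (A * adj_mat A) $$ (i, j) else (A * 1\<^sub>m ?n) $$ (i, j))"
      using A ij adj_mat(1)[OF A] by (simp add: col_M)
    also have "\<dots> = B $$ (i, j)"
      using A ij by (auto simp: adj_mat(2)[OF A] B_def)
    finally show "(A * M) $$ (i, j) = B $$ (i, j)" .
  qed (use A in \<open>auto simp: B_def M_def\<close>)
  then have "det A * det M = det B" by (metis det_mult[OF A M])
  also have "\<dots> = det A * det A * det (mat_delete (mat_delete A 0 0) k k)"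
    unfolding B_def by (rule det_scaled_unit_first_last_columns[OF A])
  finally have "det M = det A * det (mat_delete (mat_delete A 0 0) k k)"
    using det_A by (simp add: mult.assoc)
  moreover have "det M = cofactor A 0 0 * cofactor A ?L ?L - cofactor A ?L 0 * cofactor A 0 ?L"
    unfolding M_def by (rule det_identity_but_first_last_columns)
  ultimately show ?thesis by (simp add: cofactor_def mult_ac flip: power_add)
qed

lemma det_gram_mat_nonzero:
  fixes b :: "nat \<Rightarrow> nat \<Rightarrow> 'a :: linordered_field" and p :: "nat \<Rightarrow> nat"
  assumes pivot_bound: "\<And>i. i < n \<Longrightarrow> p i < N"
    and pivot_nonzero: "\<And>i. i < n \<Longrightarrow> b i (p i) \<noteq> 0"
    and pivot_echelon: "\<And>i j. i < j \<Longrightarrow> j < n \<Longrightarrow> b i (p j) = 0"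
  shows "det (mat n n (\<lambda>(i, j). \<Sum>h<N. b i h * b j h)) \<noteq> 0"
proof
  define G where "G = mat n n (\<lambda>(i, j). \<Sum>h<N. b i h * b j h)"
  assume "det (mat n n (\<lambda>(i, j). \<Sum>h<N. b i h * b j h)) = 0"
  then obtain v where v: "v \<in> carrier_vec n" "v \<noteq> 0\<^sub>v n" "G *\<^sub>v v = 0\<^sub>v n"
    using det_0_iff_vec_prod_zero_field[of G n] by (auto simp: G_def)
  define w where "w h = (\<Sum>i<n. b i h * v $ i)" for h
  have "(\<Sum>h<N. w h * w h) = (\<Sum>i<n. v $ i * (\<Sum>j<n. G $$ (i, j) * v $ j))"
    by (simp add: w_def G_def sum_product sum_distrib_left sum_distrib_right mult_ac
        sum.swap[where A = "{..<N}"])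
  also have "\<dots> = (\<Sum>i<n. v $ i * (G *\<^sub>v v) $ i)"
    using v(1) by (simp add: G_def scalar_prod_def atLeast0LessThan)
  also have "\<dots> = 0" using v(3) by simp
  finally have "(\<Sum>h<N. w h * w h) = 0" .
  then have w_zero: "w h = 0" if "h < N" for h
    using that by (subst (asm) sum_nonneg_eq_0_iff) auto
  define S where "S = {j. j < n \<and> v $ j \<noteq> 0}"
  have "S \<noteq> {}"
  proof
    assume "S = {}"
    then have "v = 0\<^sub>v n" using v(1) by (intro eq_vecI) (auto simp: S_def)
    then show False using v(2) by simp
  qed
  define J where "J = Max S"
  have "finite S" by (simp add: S_def)
  then have J: "J < n" "v $ J \<noteq> 0"
    using \<open>S \<noteq> {}\<close> Max_in[of S] by (auto simp: J_def S_def)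
  have J_max: "v $ j = 0" if "j < n" "J < j" for j
  proof (rule ccontr)
    assume "v $ j \<noteq> 0"
    then have "j \<le> J" unfolding J_def using \<open>finite S\<close> that by (simp add: S_def)
    then show False using that by simp
  qed
  \<comment> \<open>in \<open>w (p J)\<close> the terms \<open>i < J\<close> vanish by the echelon shape, those \<open>i > J\<close> by maximality of \<open>J\<close>\<close>
  have "w (p J) = b J (p J) * v $ J"
    unfolding w_def
    by (rule sum_eq_single) (use J J_max pivot_echelon in \<open>auto simp: nat_neq_iff\<close>)
  then show False using w_zero[OF pivot_bound[OF J(1)]] pivot_nonzero[OF J(1)] J(2) by simp
qed

text \<open>\<open>ballot a h\<close> counts the paths of \<open>a\<close> steps \<open>\<plusminus>1\<close> from height \<open>0\<close> to height \<open>h\<close>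
  that never go below height \<open>0\<close>.\<close>

fun ballot :: "nat \<Rightarrow> nat \<Rightarrow> nat" where
  "ballot 0 h = of_bool (h = 0)"
| "ballot (Suc a) h = (if h = 0 then 0 else ballot a (h - 1)) + ballot a (Suc h)"

lemma ballot_eq_0: "a < h \<Longrightarrow> ballot a h = 0"
  by (induction a arbitrary: h) auto

lemma ballot_diag: "ballot a a = 1"
  by (induction a) (auto simp: ballot_eq_0)

lemma sum_lessThan_Suc_shift_down:
  fixes f g :: "nat \<Rightarrow> 'a :: comm_semiring_0"
  assumes "f M = 0"
  shows "(\<Sum>h<Suc M. (if h = 0 then 0 else f (h - 1)) * g h) = (\<Sum>h<Suc M. f h * g (Suc h))"
  using assms by (subst sum.lessThan_Suc_shift) simp

lemma sum_ballot_Suc_mult: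
  assumes "a < M" "c < M"
  shows "(\<Sum>h<Suc M. ballot (Suc a) h * ballot c h) = (\<Sum>h<Suc M. ballot a h * ballot (Suc c) h)"
proof -
  have a: "ballot a M = 0" and c: "ballot c M = 0" using assms by (simp_all add: ballot_eq_0)
  have "(\<Sum>h<Suc M. ballot (Suc a) h * ballot c h)
      = (\<Sum>h<Suc M. (if h = 0 then 0 else ballot a (h - 1)) * ballot c h)
        + (\<Sum>h<Suc M. ballot c h * ballot a (Suc h))"
    by (simp add: algebra_simps sum.distrib)
  also have "\<dots> = (\<Sum>h<Suc M. ballot a h * ballot c (Suc h))
        + (\<Sum>h<Suc M. (if h = 0 then 0 else ballot c (h - 1)) * ballot a h)"
    by (simp only: sum_lessThan_Suc_shift_down[where f = "ballot a", OF a]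
        sum_lessThan_Suc_shift_down[where f = "ballot c", OF c])
  also have "\<dots> = (\<Sum>h<Suc M. ballot a h * ballot (Suc c) h)"
    by (simp add: algebra_simps sum.distrib)
  finally show ?thesis .
qed

text \<open>Splitting a path that returns to \<open>0\<close> after \<open>a + c\<close> steps at its height after \<open>a\<close> steps.\<close>

lemma sum_ballot_mult: "a + c < N \<Longrightarrow> (\<Sum>h<N. ballot a h * ballot c h) = ballot (a + c) 0"
proof (induction a arbitrary: c)
  case 0
  then show ?case by (subst sum_eq_single[of _ 0]) auto
next
  case (Suc a)
  then obtain M where N: "N = Suc M" by (cases N) auto
  have "(\<Sum>h<N. ballot (Suc a) h * ballot c h) = (\<Sum>h<N. ballot a h * ballot (Suc c) h)"
    unfolding N by (rule sum_ballot_Suc_mult) (use Suc.prems N in auto)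
  also have "\<dots> = ballot (a + Suc c) 0" by (rule Suc.IH) (use Suc.prems in auto)
  finally show ?case by simp
qed

lemma ballot_reflection:
  "a = h + 2 * d \<Longrightarrow> int (ballot a h) = int (a choose d) - int (a choose (h + d + 1))"
proof (induction a arbitrary: h d)
  case 0
  then show ?case by simp
next
  case (Suc a)
  show ?case
  proof (cases h)
    case 0
    with Suc.prems obtain d' where "d = Suc d'" by (cases d) auto
    with Suc.prems Suc.IH[of 1 d'] 0 show ?thesis by simp
  next
    case (Suc h')
    with Suc.prems have a: "a = h' + 2 * d" by simp
    show ?thesis
    proof (cases d)
      case 0
      with a have "ballot a (Suc (Suc h')) = 0" by (simp add: ballot_eq_0)
      with a Suc.IH[OF a] \<open>h = Suc h'\<close> 0 show ?thesis by simp
    next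
      case (Suc d')
      with a Suc.IH[OF a] Suc.IH[of "Suc (Suc h')" d'] \<open>h = Suc h'\<close> show ?thesis by simp
    qed
  qed
qed

lemma ballot_catalan: "int (ballot (2 * k) 0) = int ((2 * k) choose k) - int ((2 * k) choose (k + 1))"
  using ballot_reflection[of "2 * k" 0 k] by simp

lemma coeff_narayana_Suc:
  "coeff (narayana (Suc k)) i =
    (if i \<le> k then of_nat (k choose i) * of_nat (Suc k choose i) / of_nat (Suc i) else 0)"
  by (simp add: narayana_def coeff_sum coeff_monom)

lemma narayana_number_eq:
  "int (Suc (Suc i)) * (int (k choose Suc i) * int (Suc k choose Suc i)
     - int (Suc k choose Suc (Suc i)) * int (k choose i))
   = int (k choose Suc i) * int (Suc k choose Suc i)"
proof -
  have "Suc (Suc i) * (Suc k choose Suc (Suc i)) = Suc k * (k choose Suc i)"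
    using binomial_absorption[of "Suc i" "Suc k"] by simp
  then have y: "int (Suc (Suc i)) * int (Suc k choose Suc (Suc i)) = int (Suc k) * int (k choose Suc i)"
    by (metis of_nat_mult)
  have "Suc i * (Suc k choose Suc i) = Suc k * (k choose i)"
    using binomial_absorption[of i "Suc k"] by simp
  then have x: "int (Suc i) * int (Suc k choose Suc i) = int (Suc k) * int (k choose i)"
    by (metis of_nat_mult)
  have "int (Suc (Suc i)) * int (Suc k choose Suc (Suc i)) * int (k choose i)
      = int (Suc i) * int (Suc k choose Suc i) * int (k choose Suc i)"
    by (simp only: y x mult_ac)
  then show ?thesis by (simp add: algebra_simps)
qed

lemma narayana_coeff_Ints: "coeff (narayana k) i \<in> \<int>"
proof (cases k)
  case 0
  then show ?thesis by (simp add: narayana_def)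
next
  case (Suc k')
  show ?thesis
  proof (cases i)
    case (Suc i')
    define c where "c = int (k' choose Suc i') * int (Suc k' choose Suc i')
      - int (Suc k' choose Suc (Suc i')) * int (k' choose i')"
    have "of_int (int (Suc (Suc i')) * c) = (of_int (int ((k' choose Suc i') * (Suc k' choose Suc i'))) :: rat)"
      unfolding c_def narayana_number_eq by simp
    then have "of_nat (k' choose i) * of_nat (Suc k' choose i) / of_nat (Suc i) = (of_int c :: rat)"
      using Suc by (simp add: field_simps)
    then show ?thesis using \<open>k = Suc k'\<close> by (simp add: coeff_narayana_Suc)
  qed (simp add: \<open>k = Suc k'\<close> coeff_narayana_Suc)
qed

lemma sum_choose_Suc_mult_choose:
  "(\<Sum>j<k. (k choose Suc j) * (k choose j)) = (2 * k) choose (k + 1)"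
proof (cases k)
  case 0
  then show ?thesis by simp
next
  case (Suc k')
  have "(\<Sum>j<k. (k choose Suc j) * (k choose j)) = (\<Sum>j\<le>k'. (k choose j) * (k choose (k' - j)))"
    unfolding Suc lessThan_Suc_atMost
  proof (intro sum.cong refl)
    fix j assume "j \<in> {..k'}"
    then have "Suc k' - (k' - j) = Suc j" by simp
    then show "(Suc k' choose Suc j) * (Suc k' choose j) = (Suc k' choose j) * (Suc k' choose (k' - j))"
      using binomial_symmetric[of "k' - j" "Suc k'"] by simp
  qed
  also have "\<dots> = (k + k) choose k'" by (rule vandermonde)
  also have "\<dots> = (2 * k) choose (k + 1)"
    using binomial_symmetric[of k' "k + k"] Suc by (simp add: mult_2)
  finally show ?thesis .
qed

lemma poly_narayana_1:
  "poly (narayana k) 1 = of_int (int ((2 * k) choose k) - int ((2 * k) choose (k + 1)))"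
proof (cases k)
  case 0
  then show ?thesis by (simp add: narayana_def)
next
  case (Suc k')
  have summand: "(of_nat (k' choose j) * of_nat (k choose j) / of_nat (Suc j) :: rat)
      = of_nat ((k choose Suc j) * (k choose j)) / of_nat k" for j
  proof -
    have "of_nat k * of_nat (k' choose j) = (of_nat (k choose Suc j) * of_nat (Suc j) :: rat)"
      using Suc_times_binomial_eq[of k' j] Suc by (metis of_nat_mult)
    then show ?thesis using Suc by (simp add: divide_simps mult_ac)
  qed
  have "poly (narayana k) 1 = (\<Sum>j<k. of_nat (k' choose j) * of_nat (k choose j) / of_nat (Suc j) :: rat)"
    using Suc by (simp add: narayana_def poly_sum poly_monom)
  also have "\<dots> = of_nat ((2 * k) choose (k + 1)) / of_nat k"
    by (simp only: summand flip: sum_divide_distrib of_nat_sum sum_choose_Suc_mult_choose)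
  also have "\<dots> = of_int (int ((2 * k) choose k) - int ((2 * k) choose (k + 1)))"
  proof -
    have "Suc k * ((2 * k) choose Suc k) = k * ((2 * k) choose k)"
      using binomial_absorption[of k "2 * k"] binomial_absorb_comp[of "2 * k" k]
      by (metis add_diff_cancel_left' mult_2)
    then have "(of_nat (Suc k) :: rat) * of_nat ((2 * k) choose Suc k) = of_nat k * of_nat ((2 * k) choose k)"
      by (metis of_nat_mult)
    with Suc show ?thesis by (simp add: field_simps)
  qed
  finally show ?thesis .
qed

lemma poly_narayana_1_ballot: "poly (narayana k) 1 = of_nat (ballot (2 * k) 0)"
  using poly_narayana_1[of k] ballot_catalan[of k] by (metis of_int_of_nat_eq)

lemma det_coeff_Ints:
  fixes A :: "rat poly mat"
  assumes A: "A \<in> carrier_mat n n" and entries: "\<And>i j l. i < n \<Longrightarrow> j < n \<Longrightarrow> coeff (A $$ (i, j)) l \<in> \<int>"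
  shows "coeff (det A) l \<in> \<int>"
proof -
  interpret map_of_int: comm_ring_hom "map_poly (of_int :: int \<Rightarrow> rat)"
    by unfold_locales (auto intro!: poly_eqI simp: coeff_map_poly coeff_mult of_int_hom.hom_sum)
  have "map_poly of_int (map_poly floor p) = p" if "\<And>l. coeff p l \<in> \<int>" for p :: "rat poly"
    using that by (intro poly_eqI) (simp add: coeff_map_poly)
  then have "map_mat (map_poly of_int) (map_mat (map_poly floor) A) = A"
    using A entries by (intro eq_matI) auto
  then have "det A = map_poly of_int (det (map_mat (map_poly floor) A))"
    by (metis map_of_int.hom_det)
  then show ?thesis by (simp add: coeff_map_poly)
qed

definition narayana_hankel_mat :: "nat \<Rightarrow> nat \<Rightarrow> rat poly mat" where
  "narayana_hankel_mat m n = mat n n (\<lambda>(i, j). narayana (i + j + m))"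

lemma hankel_narayana_det: "hankel_narayana m n = det (narayana_hankel_mat m n)"
  by (simp add: hankel_narayana_def narayana_hankel_mat_def)

lemma narayana_hankel_mat_carrier: "narayana_hankel_mat m n \<in> carrier_mat n n"
  by (simp add: narayana_hankel_mat_def)

lemma hankel_narayana_coeff_Ints: "coeff (hankel_narayana m n) l \<in> \<int>"
  unfolding hankel_narayana_det
  by (rule det_coeff_Ints[OF narayana_hankel_mat_carrier])
    (simp add: narayana_hankel_mat_def narayana_coeff_Ints)

lemma hankel_narayana_0: "hankel_narayana m 0 = 1"
  by (simp add: hankel_narayana_def)

lemma hankel_narayana_1: "hankel_narayana m 1 = narayana m"
  unfolding hankel_narayana_def by (subst det_single) auto

lemma det_catalan_hankel_nonzero:
  "det (mat n n (\<lambda>(i, j). of_nat (ballot (2 * (i + j + m)) 0) :: rat)) \<noteq> 0"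
proof -
  define N where "N = 4 * n + 2 * m + 1"
  define b where "b i h = (of_nat (ballot (2 * i + m) h) :: rat)" for i h
  have "mat n n (\<lambda>(i, j). of_nat (ballot (2 * (i + j + m)) 0) :: rat)
      = mat n n (\<lambda>(i, j). \<Sum>h<N. b i h * b j h)"
  proof (rule eq_matI)
    fix i j assume "i < dim_row (mat n n (\<lambda>(i, j). \<Sum>h<N. b i h * b j h))"
      "j < dim_col (mat n n (\<lambda>(i, j). \<Sum>h<N. b i h * b j h))"
    then have "(\<Sum>h<N. ballot (2 * i + m) h * ballot (2 * j + m) h) = ballot (2 * (i + j + m)) 0"
      by (subst sum_ballot_mult) (auto simp: N_def algebra_simps)
    with \<open>i < _\<close> \<open>j < _\<close> show "mat n n (\<lambda>(i, j). of_nat (ballot (2 * (i + j + m)) 0)) $$ (i, j)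
        = mat n n (\<lambda>(i, j). \<Sum>h<N. b i h * b j h) $$ (i, j)"
      by (simp add: b_def flip: of_nat_mult of_nat_sum)
  qed auto
  also have "det \<dots> \<noteq> 0"
    by (rule det_gram_mat_nonzero[where p = "\<lambda>i. 2 * i + m"])
      (auto simp: N_def b_def ballot_diag ballot_eq_0)
  finally show ?thesis .
qed

lemma hankel_narayana_nonzero: "hankel_narayana m n \<noteq> 0"
proof -
  interpret eval_1: comm_ring_hom "\<lambda>p :: rat poly. poly p 1" by unfold_locales auto
  have "map_mat (\<lambda>p. poly p 1) (narayana_hankel_mat m n)
      = mat n n (\<lambda>(i, j). of_nat (ballot (2 * (i + j + m)) 0))"
    by (rule eq_matI) (auto simp: narayana_hankel_mat_def poly_narayana_1_ballot)
  then have "poly (hankel_narayana m n) 1 = det (mat n n (\<lambda>(i, j). of_nat (ballot (2 * (i + j + m)) 0)))"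
    unfolding hankel_narayana_det by (metis eval_1.hom_det)
  then show ?thesis using det_catalan_hankel_nonzero by force
qed

lemma hankel_narayana_condensation:
  "hankel_narayana m (Suc k) * hankel_narayana (m + 2) (Suc k) - (hankel_narayana (m + 1) (Suc k))\<^sup>2
   = hankel_narayana m (Suc (Suc k)) * hankel_narayana (m + 2) k"
proof -
  let ?A = "narayana_hankel_mat m (Suc (Suc k))"
  have "det (mat_delete ?A 0 0) * det (mat_delete ?A (Suc k) (Suc k))
      - det (mat_delete ?A 0 (Suc k)) * det (mat_delete ?A (Suc k) 0)
      = det ?A * det (mat_delete (mat_delete ?A 0 0) k k)"
    by (rule desnanot_jacobi[OF narayana_hankel_mat_carrier])
      (metis hankel_narayana_det hankel_narayana_nonzero)
  moreover have "mat_delete ?A 0 0 = narayana_hankel_mat (m + 2) (Suc k)"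
    "mat_delete ?A (Suc k) (Suc k) = narayana_hankel_mat m (Suc k)"
    "mat_delete ?A 0 (Suc k) = narayana_hankel_mat (m + 1) (Suc k)"
    "mat_delete ?A (Suc k) 0 = narayana_hankel_mat (m + 1) (Suc k)"
    "mat_delete (narayana_hankel_mat (m + 2) (Suc k)) k k = narayana_hankel_mat (m + 2) k"
    by (rule eq_matI; auto simp: narayana_hankel_mat_def)+
  ultimately show ?thesis by (simp add: hankel_narayana_det power2_eq_square mult.commute)
qed

lemma condensation_recurrence_unique:
  fixes p q :: "nat \<Rightarrow> nat \<Rightarrow> 'a :: idom"
  assumes nonzero: "\<And>m n. p m n \<noteq> 0"
    and q_0: "\<And>m. q m 0 = p m 0" and q_1: "\<And>m. q m 1 = p m 1"
    and p_rec: "\<And>m k. p m (Suc k) * p (m + 2) (Suc k) - (p (m + 1) (Suc k))\<^sup>2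
                       = p m (Suc (Suc k)) * p (m + 2) k"
    and q_rec: "\<And>m k. q m (Suc k) * q (m + 2) (Suc k) - (q (m + 1) (Suc k))\<^sup>2
                       = q m (Suc (Suc k)) * q (m + 2) k"
  shows "q m n = p m n"
proof (induction n arbitrary: m rule: less_induct)
  case (less n)
  consider "n = 0" | "n = 1" | k where "n = Suc (Suc k)"
    by (metis One_nat_def not0_implies_Suc)
  then show ?case
  proof cases
    case 3
    then have "q m n * p (m + 2) k = p m n * p (m + 2) k"
      using q_rec[of m k] p_rec[of m k] less.IH[of "Suc k"] less.IH[of k] by simp
    then show ?thesis using nonzero by simp
  qed (simp_all add: q_0 q_1[unfolded One_nat_def])
qed

theorem mainTheorem8:
  shows "(\<forall>m n i. coeff (hankel_narayana m n) i \<in> \<int>)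
    \<and> (\<forall>m n. hankel_narayana m n \<noteq> 0)
    \<and> (\<forall>m. hankel_narayana m 0 = 1)
    \<and> (\<forall>m. hankel_narayana m 1 = narayana m)
    \<and> (\<forall>m n. n \<ge> 2 \<longrightarrow>
          hankel_narayana m (n - 1) * hankel_narayana (m + 2) (n - 1) - (hankel_narayana (m + 1) (n - 1))^2
          = hankel_narayana m n * hankel_narayana (m + 2) (n - 2))
    \<and> (\<forall>q :: nat \<Rightarrow> nat \<Rightarrow> rat poly fract.
          (\<forall>m. q m 0 = 1) \<longrightarrow>
          (\<forall>m. q m 1 = to_fract (narayana m)) \<longrightarrow>
          (\<forall>m n. n \<ge> 2 \<longrightarrow>
             q m (n - 1) * q (m + 2) (n - 1) - (q (m + 1) (n - 1))^2 = q m n * q (m + 2) (n - 2)) \<longrightarrow>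
          (\<forall>m n. q m n = to_fract (hankel_narayana m n)))"
proof (intro conjI allI impI)
  show "coeff (hankel_narayana m n) i \<in> \<int>" for m n i by (rule hankel_narayana_coeff_Ints)
  show "hankel_narayana m n \<noteq> 0" for m n by (rule hankel_narayana_nonzero)
  show "hankel_narayana m 0 = 1" for m by (rule hankel_narayana_0)
  show "hankel_narayana m 1 = narayana m" for m by (rule hankel_narayana_1)
next
  fix m n :: nat
  assume "2 \<le> n"
  then obtain k where "n = Suc (Suc k)" by (metis add_2_eq_Suc le_Suc_ex)
  then show "hankel_narayana m (n - 1) * hankel_narayana (m + 2) (n - 1) - (hankel_narayana (m + 1) (n - 1))^2
      = hankel_narayana m n * hankel_narayana (m + 2) (n - 2)"
    using hankel_narayana_condensation[of m k] by simp
next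
  fix q :: "nat \<Rightarrow> nat \<Rightarrow> rat poly fract" and m n :: nat
  assume q_0: "\<forall>m. q m 0 = 1" and q_1: "\<forall>m. q m 1 = to_fract (narayana m)"
    and q_rec: "\<forall>m n. n \<ge> 2 \<longrightarrow>
      q m (n - 1) * q (m + 2) (n - 1) - (q (m + 1) (n - 1))^2 = q m n * q (m + 2) (n - 2)"
  show "q m n = to_fract (hankel_narayana m n)"
  proof (rule condensation_recurrence_unique[where p = "\<lambda>m n. to_fract (hankel_narayana m n)"])
    fix m k
    show "to_fract (hankel_narayana m (Suc k)) * to_fract (hankel_narayana (m + 2) (Suc k))
        - (to_fract (hankel_narayana (m + 1) (Suc k)))\<^sup>2
        = to_fract (hankel_narayana m (Suc (Suc k))) * to_fract (hankel_narayana (m + 2) k)"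
      using arg_cong[OF hankel_narayana_condensation[of m k], of to_fract]
      by (simp add: power2_eq_square)
    show "q m (Suc k) * q (m + 2) (Suc k) - (q (m + 1) (Suc k))\<^sup>2 = q m (Suc (Suc k)) * q (m + 2) k"
      using q_rec[rule_format, of "Suc (Suc k)" m] by simp
    show "q m 1 = to_fract (hankel_narayana m 1)" using q_1 hankel_narayana_1 by metis
  qed (simp_all add: q_0 hankel_narayana_nonzero hankel_narayana_0)
qed

end
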